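(* Let $A\in\mathcal{C}^{\mathrm{clq}}$ be such that the associated geometry $\mathbf{A}:=\mathcal{G}(A)$ is $(n-1)$-pure. Then $\mathbf{A}^{\mathrm{geo}}\in\mathcal{C}^{\mathrm{geo}}$.
   Context: Fix a natural number $n$ and a symmetric irreflexive $n$-ary relation symbol $S$; substructures are induced. For an $\{S\}$-structure $A$, $K\subseteq A$ with $|K|\ge n$ is a clique if all $n$-element subsets of $K$ (as tuples of distinct elements) lie in $S^A$; maximal cliques are those not properly contained in another clique; $\mathcal{M}(A)$ is the set of maximal cliques. For finite $X$, $|X|_*=\max\{0,|X|-(n-1)\}$; for finite $A$, $\delta_s(A)=|A|-\sum_{K\in\mathcal{M}(A)}|K|_*$; for finite $B\subseteq A$, $\delta_s(A/B)=\delta_s(A)-\delta_s(B)$; $B\le A$ means $\delta_s(X/B)\ge0$ for all finite $X$ with $B\subseteq X\subseteq A$. $\mathcal{C}^{\mathrm{clq}}_0$ is the class of finite $\{S\}$-structures in which distinct maximal cliques intersect in fewer than $n$ points; $\mathcal{C}^{\mathrm{clq}}$ is the class of $A\in\mathcal{C}^{\mathrm{clq}}_0$ with $\{a\}\le A$ for all $a\in A$. For an $\{S\}$-structure $A$ with $\{a\}\le A$ for all $a\in A$, the associated geometry $\mathcal{G}(A)$ is the geometry (finitary matroid with $\mathrm{cl}(\emptyset)=\emptyset$ and singletons closed) on the universe of $A$ whose dimension function is $d(X)=\inf\{\delta_s(Y):X\subseteq Y\subseteq A,\ Y\text{ finite}\}$ for finite $X$. A geometry is $m$-pure if $m$ is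 the maximal natural number such that every $m$-element subset is independent. For a geometry $\mathbf{A}$ on $A$, $\mathbf{A}^{\mathrm{geo}}$ is the $\{S\}$-structure on $A$ whose maximal cliques are exactly the sets $\mathrm{cl}_{\mathbf{A}}(C)$ with $C\in[A]^{n-1}$ and $\mathrm{cl}_{\mathbf{A}}(C)\ne C$. An $\{S\}$-structure $A$ is geometric if whenever $X\subseteq A$, $|X|\ge n$ and $\delta_s(X)<n$, there is a unique $K\in\mathcal{M}(A)$ with $X\subseteq K$; $\mathcal{C}^{\mathrm{geo}}$ is the class of finite geometric $\{S\}$-structures. *)

theory Defs
  imports Main
begin

text \<open>An {S}-structure with universe A, S a symmetric irreflexive n-ary relation,
  is represented by the set S of n-element subsets {a1,...,an} such that
  (a1,...,an) lies in S (symmetry + irreflexivity make this a faithful encoding).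
  Substructures are induced: the substructure on X just uses the members of S
  contained in X.\<close>

definition is_structure :: "nat \<Rightarrow> 'a set \<Rightarrow> 'a set set \<Rightarrow> bool" where
  "is_structure n A S \<longleftrightarrow> (\<forall>Y\<in>S. Y \<subseteq> A \<and> finite Y \<and> card Y = n)"

definition clique :: "nat \<Rightarrow> 'a set set \<Rightarrow> 'a set \<Rightarrow> 'a set \<Rightarrow> bool" where
  "clique n S X K \<longleftrightarrow> K \<subseteq> X \<and> (infinite K \<or> n \<le> card K) \<and>
     (\<forall>Y. Y \<subseteq> K \<and> finite Y \<and> card Y = n \<longrightarrow> Y \<in> S)"

definition maxcliques :: "nat \<Rightarrow> 'a set set \<Rightarrow> 'a set \<Rightarrow> 'a set set" where
  "maxcliques n S X = {K. clique n S X K \<and> (\<forall>K'. clique n S X K' \<and> K \<subseteq> K' \<longrightarrow> K' = K)}"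

text \<open>|X|_* = max 0 (|X| - (n-1)) (truncated subtraction on nat).\<close>
definition starcard :: "nat \<Rightarrow> 'a set \<Rightarrow> nat" where
  "starcard n X = card X - (n - 1)"

definition delta :: "nat \<Rightarrow> 'a set set \<Rightarrow> 'a set \<Rightarrow> int" where
  "delta n S X = int (card X) - (\<Sum>K\<in>maxcliques n S X. int (starcard n K))"

definition strong :: "nat \<Rightarrow> 'a set set \<Rightarrow> 'a set \<Rightarrow> 'a set \<Rightarrow> bool" where
  "strong n S B A \<longleftrightarrow> (\<forall>X. finite X \<and> B \<subseteq> X \<and> X \<subseteq> A \<longrightarrow> delta n S X - delta n S B \<ge> 0)"

definition C_clq0 :: "nat \<Rightarrow> 'a set \<Rightarrow> 'a set set \<Rightarrow> bool" where
  "C_clq0 n A S \<longleftrightarrow> finite A \<and> is_structure n A S \<and>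
     (\<forall>K1\<in>maxcliques n S A. \<forall>K2\<in>maxcliques n S A. K1 \<noteq> K2 \<longrightarrow> card (K1 \<inter> K2) < n)"

definition C_clq :: "nat \<Rightarrow> 'a set \<Rightarrow> 'a set set \<Rightarrow> bool" where
  "C_clq n A S \<longleftrightarrow> C_clq0 n A S \<and> (\<forall>a\<in>A. strong n S {a} A)"

definition gdim :: "nat \<Rightarrow> 'a set set \<Rightarrow> 'a set \<Rightarrow> 'a set \<Rightarrow> int" where
  "gdim n S A X = Inf {delta n S Y | Y. finite Y \<and> X \<subseteq> Y \<and> Y \<subseteq> A}"

definition gindep :: "nat \<Rightarrow> 'a set set \<Rightarrow> 'a set \<Rightarrow> 'a set \<Rightarrow> bool" where
  "gindep n S A X \<longleftrightarrow> X \<subseteq> A \<and> finite X \<and> gdim n S A X = int (card X)"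

definition gcl :: "nat \<Rightarrow> 'a set set \<Rightarrow> 'a set \<Rightarrow> 'a set \<Rightarrow> 'a set" where
  "gcl n S A X = {a\<in>A. gdim n S A (insert a X) = gdim n S A X}"

text \<open>m-pure: m is the largest natural number (among those for which m-element
  subsets exist, i.e. m \<le> |A|) such that every m-element subset is independent.\<close>
definition gpure :: "nat \<Rightarrow> 'a set set \<Rightarrow> 'a set \<Rightarrow> nat \<Rightarrow> bool" where
  "gpure n S A m \<longleftrightarrow> m \<le> card A \<and>
     (\<forall>X. X \<subseteq> A \<and> card X = m \<longrightarrow> gindep n S A X) \<and>
     (\<forall>k. k \<le> card A \<and> (\<forall>X. X \<subseteq> A \<and> card X = k \<longrightarrow> gindep n S A X) \<longrightarrow> k \<le> m)"

definition geo_rel :: "nat \<Rightarrow> 'a set set \<Rightarrow> 'a set \<Rightarrow> 'a set set" where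
  "geo_rel n S A = {Y. Y \<subseteq> A \<and> finite Y \<and> card Y = n \<and>
     (\<exists>C. C \<subseteq> A \<and> finite C \<and> card C = n - 1 \<and> gcl n S A C \<noteq> C \<and> Y \<subseteq> gcl n S A C)}"

definition geometric :: "nat \<Rightarrow> 'a set \<Rightarrow> 'a set set \<Rightarrow> bool" where
  "geometric n A S \<longleftrightarrow> (\<forall>X. X \<subseteq> A \<and> finite X \<and> n \<le> card X \<and> delta n S X < int n \<longrightarrow>
     (\<exists>!K. K \<in> maxcliques n S A \<and> X \<subseteq> K))"

definition C_geo :: "nat \<Rightarrow> 'a set \<Rightarrow> 'a set set \<Rightarrow> bool" where
  "C_geo n A S \<longleftrightarrow> finite A \<and> is_structure n A S \<and> geometric n A S"

end

theory Submission
  imports Defs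
begin

text \<open>
  Purity gives every (n-1)-set C dimension n-1; call cl(C) a line when it properly
  extends C. By submodularity of the dimension, every line has dimension and \<delta> equal
  to n-1, two lines sharing n-1 points coincide, and every set of at least n points and
  dimension at most n-1 lies in a line. Hence the maximal cliques of A^geo are exactly
  the lines, and they pairwise meet in fewer than n points.

  Write \<delta>' for the predimension of A^geo. If W contains every line it meets in n points,
  then for each maximal clique K of A meeting W in n points, K \<inter> W lies in a unique
  line, and that line lies in W. Since |L|_* is the sum of the |K \<inter> L|_* for every
  line L (this is \<delta>(L) = n-1), regrouping the clique sum of \<delta>(W) by lines gives
  \<delta>'(W) = \<delta>(W). Adding to X a point of a line that already meets X in n points does
  not increase \<delta>', so X has such a hull W with \<delta>'(W) \<le> \<delta>'(X). Therefore, if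
  \<delta>'(X) < n, then d(X) \<le> \<delta>(W) = \<delta>'(W) < n, so X lies in a line, necessarily unique.
\<close>

lemma clique_subset_universe: "clique n R X K \<Longrightarrow> K \<subseteq> X"
  by (simp add: clique_def)

lemma clique_mono_universe: "clique n R X K \<Longrightarrow> X \<subseteq> Y \<Longrightarrow> clique n R Y K"
  unfolding clique_def by blast

lemma clique_restrict_universe: "clique n R Y K \<Longrightarrow> K \<subseteq> X \<Longrightarrow> clique n R X K"
  unfolding clique_def by blast

lemma clique_subset: "clique n R X K \<Longrightarrow> K' \<subseteq> K \<Longrightarrow> n \<le> card K' \<Longrightarrow> clique n R X K'"
  unfolding clique_def by blast

locale clq0_structure =
  fixes n :: nat and R :: "'a set set" and A :: "'a set"
  assumes n_pos: "1 \<le> n" and clq0: "C_clq0 n A R"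
begin

lemma finite_A: "finite A"
  using clq0 by (simp add: C_clq0_def)

lemma finite_subset_A: "X \<subseteq> A \<Longrightarrow> finite X"
  by (rule finite_subset[OF _ finite_A])

lemma finite_clique: "clique n R A K \<Longrightarrow> finite K"
  by (rule finite_subset_A[OF clique_subset_universe])

lemma card_clique_ge: "clique n R A K \<Longrightarrow> n \<le> card K"
  using finite_clique unfolding clique_def by blast

lemma maxclique_clique: "K \<in> maxcliques n R A \<Longrightarrow> clique n R A K"
  by (simp add: maxcliques_def)

lemma finite_maxclique: "K \<in> maxcliques n R A \<Longrightarrow> finite K"
  by (rule finite_clique[OF maxclique_clique])

lemma finite_maxcliques: "finite (maxcliques n R A)"
proof -
  have "maxcliques n R A \<subseteq> Pow A"
    unfolding maxcliques_def clique_def by auto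
  then show ?thesis
    using finite_A by (meson finite_Pow_iff finite_subset)
qed

lemma clique_in_maxclique:
  assumes "clique n R A K"
  obtains M where "M \<in> maxcliques n R A" "K \<subseteq> M"
proof -
  let ?F = "{K'. clique n R A K' \<and> K \<subseteq> K'}"
  have "?F \<subseteq> Pow A"
    using clique_subset_universe by blast
  hence "finite ?F"
    using finite_A by (meson finite_Pow_iff finite_subset)
  moreover have "K \<in> ?F"
    using assms by simp
  ultimately have "\<exists>M\<in>?F. \<forall>K'\<in>?F. M \<subseteq> K' \<longrightarrow> M = K'"
    by (intro finite_has_maximal) auto
  then obtain M where M: "M \<in> ?F" and max: "\<forall>K'\<in>?F. M \<subseteq> K' \<longrightarrow> M = K'" ..
  have "K' = M" if "clique n R A K'" "M \<subseteq> K'" for K'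
  proof -
    have "K \<subseteq> K'"
      using M that(2) by auto
    then show ?thesis
      using max that by auto
  qed
  hence "M \<in> maxcliques n R A"
    using M unfolding maxcliques_def by simp
  then show ?thesis
    using that M by simp
qed

lemma maxcliques_eqI:
  "K1 \<in> maxcliques n R A \<Longrightarrow> K2 \<in> maxcliques n R A \<Longrightarrow> n \<le> card (K1 \<inter> K2) \<Longrightarrow> K1 = K2"
  using clq0 unfolding C_clq0_def by (meson not_le)

lemma maxcliques_eqI_subset:
  assumes "K1 \<in> maxcliques n R A" "K2 \<in> maxcliques n R A" "X \<subseteq> K1 \<inter> K2" "n \<le> card X"
  shows "K1 = K2"
proof -
  have "card X \<le> card (K1 \<inter> K2)"
    using assms(1,3) finite_maxclique by (intro card_mono) auto
  then show ?thesis
    using maxcliques_eqI[OF assms(1,2)] assms(4) by linarith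
qed

lemma maxcliques_induced:
  assumes "X \<subseteq> A"
  shows "maxcliques n R X = (\<lambda>K. K \<inter> X) ` {K \<in> maxcliques n R A. n \<le> card (K \<inter> X)}"
proof (intro equalityI subsetI)
  fix Q assume "Q \<in> maxcliques n R X"
  hence Q: "clique n R X Q" "\<And>K'. clique n R X K' \<Longrightarrow> Q \<subseteq> K' \<Longrightarrow> K' = Q"
    by (auto simp: maxcliques_def)
  have QA: "clique n R A Q"
    using Q(1) assms by (rule clique_mono_universe)
  then obtain K where K: "K \<in> maxcliques n R A" "Q \<subseteq> K"
    by (rule clique_in_maxclique)
  have QX: "Q \<subseteq> X"
    using Q(1) by (rule clique_subset_universe)
  have "card Q \<le> card (K \<inter> X)"
    using QX K finite_maxclique by (intro card_mono) auto
  hence KX: "n \<le> card (K \<inter> X)"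
    using card_clique_ge[OF QA] by linarith
  have "clique n R X (K \<inter> X)"
    using clique_subset[OF maxclique_clique[OF K(1)] _ KX] clique_restrict_universe by blast
  hence "K \<inter> X = Q"
    using Q(2) QX K(2) by blast
  then show "Q \<in> (\<lambda>K. K \<inter> X) ` {K \<in> maxcliques n R A. n \<le> card (K \<inter> X)}"
    using K(1) KX by blast
next
  fix Q assume "Q \<in> (\<lambda>K. K \<inter> X) ` {K \<in> maxcliques n R A. n \<le> card (K \<inter> X)}"
  then obtain K where K: "K \<in> maxcliques n R A" "n \<le> card (K \<inter> X)" and Q: "Q = K \<inter> X"
    by blast
  have "clique n R X Q"
    using clique_subset[OF maxclique_clique[OF K(1)] _ K(2)] clique_restrict_universe Q by blast
  moreover have "K' = Q" if K': "clique n R X K'" "Q \<subseteq> K'" for K'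
  proof -
    obtain M where M: "M \<in> maxcliques n R A" "K' \<subseteq> M"
      using clique_mono_universe[OF K'(1) assms] by (rule clique_in_maxclique)
    have "M = K"
      using maxcliques_eqI_subset[OF M(1) K(1) _ K(2)] K'(2) M(2) Q by blast
    then show ?thesis
      using M(2) K' Q clique_subset_universe by blast
  qed
  ultimately show "Q \<in> maxcliques n R X"
    unfolding maxcliques_def by blast
qed

lemma delta_eq_sum_maxcliques:
  assumes "X \<subseteq> A"
  shows "delta n R X = int (card X) - (\<Sum>K\<in>maxcliques n R A. int (starcard n (K \<inter> X)))"
proof -
  let ?M = "{K \<in> maxcliques n R A. n \<le> card (K \<inter> X)}"
  have "inj_on (\<lambda>K. K \<inter> X) ?M"
  proof (rule inj_onI)
    fix K1 K2 assume "K1 \<in> ?M" "K2 \<in> ?M" "K1 \<inter> X = K2 \<inter> X"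
    then show "K1 = K2"
      using maxcliques_eqI_subset[of K1 K2 "K1 \<inter> X"] by blast
  qed
  hence "(\<Sum>Q\<in>maxcliques n R X. int (starcard n Q)) = (\<Sum>K\<in>?M. int (starcard n (K \<inter> X)))"
    unfolding maxcliques_induced[OF assms] by (simp add: sum.reindex)
  also have "\<dots> = (\<Sum>K\<in>maxcliques n R A. int (starcard n (K \<inter> X)))"
    by (rule sum.mono_neutral_left[OF finite_maxcliques]) (auto simp: starcard_def)
  finally show ?thesis
    unfolding delta_def by simp
qed

lemma starcard_Un_Int_ge:
  assumes "finite X" "finite Y"
  shows "starcard m X + starcard m Y \<le> starcard m (X \<union> Y) + starcard m (X \<inter> Y)"
proof -
  have "card (X \<union> Y) + card (X \<inter> Y) = card X + card Y"
    using card_Un_Int assms by metis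
  moreover have "card (X \<inter> Y) \<le> card X" "card X \<le> card (X \<union> Y)" "card Y \<le> card (X \<union> Y)"
    using assms by (auto intro!: card_mono)
  ultimately show ?thesis
    unfolding starcard_def by linarith
qed

lemma delta_submodular:
  assumes "X \<subseteq> A" "Y \<subseteq> A"
  shows "delta n R (X \<union> Y) + delta n R (X \<inter> Y) \<le> delta n R X + delta n R Y"
proof -
  have "card (X \<union> Y) + card (X \<inter> Y) = card X + card Y"
    using card_Un_Int assms finite_subset_A by metis
  moreover have "(\<Sum>K\<in>maxcliques n R A. int (starcard n (K \<inter> X)) + int (starcard n (K \<inter> Y)))
      \<le> (\<Sum>K\<in>maxcliques n R A. int (starcard n (K \<inter> (X \<union> Y))) + int (starcard n (K \<inter> (X \<inter> Y))))"
  proof (rule sum_mono)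
    fix K assume "K \<in> maxcliques n R A"
    hence "finite (K \<inter> X)" "finite (K \<inter> Y)"
      using finite_maxclique by auto
    moreover have "K \<inter> (X \<union> Y) = (K \<inter> X) \<union> (K \<inter> Y)" "K \<inter> (X \<inter> Y) = (K \<inter> X) \<inter> (K \<inter> Y)"
      by auto
    ultimately show "int (starcard n (K \<inter> X)) + int (starcard n (K \<inter> Y))
        \<le> int (starcard n (K \<inter> (X \<union> Y))) + int (starcard n (K \<inter> (X \<inter> Y)))"
      using starcard_Un_Int_ge[of "K \<inter> X" "K \<inter> Y" n] by simp
  qed
  moreover have "X \<union> Y \<subseteq> A" "X \<inter> Y \<subseteq> A"
    using assms by auto
  ultimately show ?thesis
    using assms unfolding sum.distrib by (simp add: delta_eq_sum_maxcliques)
qed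

lemma delta_clique:
  assumes "clique n R A Q"
  shows "delta n R Q = int n - 1"
proof -
  have "clique n R Q Q"
    using assms by (rule clique_restrict_universe) simp
  hence "maxcliques n R Q = {Q}"
    using clique_subset_universe unfolding maxcliques_def by blast
  then show ?thesis
    using card_clique_ge[OF assms] n_pos unfolding delta_def starcard_def by simp
qed

lemma delta_insert_maxclique_le:
  assumes X: "X \<subseteq> A" and K: "K \<in> maxcliques n R A" "n \<le> card (K \<inter> X)" and a: "a \<in> K" "a \<notin> X"
  shows "delta n R (insert a X) \<le> delta n R X"
proof -
  let ?s = "\<lambda>Y K'. int (starcard n (K' \<inter> Y))"
  have "K \<inter> insert a X = insert a (K \<inter> X)"
    using a by blast
  hence "?s X K < ?s (insert a X) K"
    using K(2) finite_maxclique[OF K(1)] a(2) unfolding starcard_def by simp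
  moreover have "?s X K' \<le> ?s (insert a X) K'" if "K' \<in> maxcliques n R A" for K'
    using finite_maxclique[OF that] unfolding starcard_def
    by (simp add: card_mono diff_le_mono subset_insertI2)
  ultimately have "(\<Sum>K'\<in>maxcliques n R A. ?s X K') < (\<Sum>K'\<in>maxcliques n R A. ?s (insert a X) K')"
    using K(1) by (intro sum_strict_mono_ex1[OF finite_maxcliques]) auto
  moreover have "insert a X \<subseteq> A"
    using X a(1) K(1) maxclique_clique clique_subset_universe by blast
  moreover have "card (insert a X) = card X + 1"
    using finite_subset_A[OF X] a(2) by simp
  ultimately show ?thesis
    using X by (simp add: delta_eq_sum_maxcliques)
qed

definition clique_closed :: "'a set \<Rightarrow> bool" where
  "clique_closed W \<longleftrightarrow> (\<forall>K\<in>maxcliques n R A. n \<le> card (K \<inter> W) \<longrightarrow> K \<subseteq> W)"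

lemma clique_closed_hull:
  assumes "X \<subseteq> A"
  obtains W where "X \<subseteq> W" "W \<subseteq> A" "delta n R W \<le> delta n R X" "clique_closed W"
  using assms
proof (induction "card (A - X)" arbitrary: X rule: less_induct)
  case (less X)
  show ?case
  proof (cases "clique_closed X")
    case True
    then show ?thesis
      using less.prems by blast
  next
    case False
    then obtain K a where K: "K \<in> maxcliques n R A" "n \<le> card (K \<inter> X)" and a: "a \<in> K" "a \<notin> X"
      unfolding clique_closed_def by blast
    have aA: "a \<in> A"
      using K(1) a(1) maxclique_clique clique_subset_universe by blast
    have "card (A - insert a X) < card (A - X)"
      using aA a(2) finite_A by (intro psubset_card_mono) auto
    moreover have "delta n R (insert a X) \<le> delta n R X"
      using delta_insert_maxclique_le[OF less.prems(2) K a] .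
    moreover have "insert a X \<subseteq> A"
      using aA less.prems(2) by simp
    ultimately show ?thesis
      using less.hyps[of "insert a X"] less.prems(1) by (meson order.trans subset_insertI)
  qed
qed

lemma finite_supersets: "finite {Y. X \<subseteq> Y \<and> Y \<subseteq> A}"
  using finite_A by (simp add: finite_subset[of _ "Pow A"] subset_eq)

lemma gdim_eq_Min:
  assumes "X \<subseteq> A"
  shows "gdim n R A X = Min (delta n R ` {Y. X \<subseteq> Y \<and> Y \<subseteq> A})"
proof -
  have "{delta n R Y | Y. finite Y \<and> X \<subseteq> Y \<and> Y \<subseteq> A} = delta n R ` {Y. X \<subseteq> Y \<and> Y \<subseteq> A}"
    using finite_subset_A by blast
  moreover have "delta n R ` {Y. X \<subseteq> Y \<and> Y \<subseteq> A} \<noteq> {}"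
    using assms by blast
  ultimately show ?thesis
    unfolding gdim_def using finite_supersets by (simp add: cInf_eq_Min)
qed

lemma gdim_le_delta: "X \<subseteq> Y \<Longrightarrow> Y \<subseteq> A \<Longrightarrow> gdim n R A X \<le> delta n R Y"
  using finite_supersets by (simp add: gdim_eq_Min)

lemma gdim_attained:
  assumes "X \<subseteq> A"
  obtains Y where "X \<subseteq> Y" "Y \<subseteq> A" "delta n R Y = gdim n R A X"
proof -
  have "gdim n R A X \<in> delta n R ` {Y. X \<subseteq> Y \<and> Y \<subseteq> A}"
    unfolding gdim_eq_Min[OF assms] using assms finite_supersets by (intro Min_in) auto
  then show ?thesis
    using that by auto
qed

lemma gdim_mono:
  assumes "X \<subseteq> X'" "X' \<subseteq> A"
  shows "gdim n R A X \<le> gdim n R A X'"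
proof -
  obtain Y where "X' \<subseteq> Y" "Y \<subseteq> A" "delta n R Y = gdim n R A X'"
    using gdim_attained[OF assms(2)] .
  then show ?thesis
    using gdim_le_delta[of X Y] assms(1) by simp
qed

lemma gdim_submodular:
  assumes "X \<subseteq> A" "Y \<subseteq> A"
  shows "gdim n R A (X \<union> Y) + gdim n R A (X \<inter> Y) \<le> gdim n R A X + gdim n R A Y"
proof -
  obtain X' where X': "X \<subseteq> X'" "X' \<subseteq> A" "delta n R X' = gdim n R A X"
    using gdim_attained[OF assms(1)] .
  obtain Y' where Y': "Y \<subseteq> Y'" "Y' \<subseteq> A" "delta n R Y' = gdim n R A Y"
    using gdim_attained[OF assms(2)] .
  have "gdim n R A (X \<union> Y) \<le> delta n R (X' \<union> Y')"
    using X' Y' by (intro gdim_le_delta) auto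
  moreover have "gdim n R A (X \<inter> Y) \<le> delta n R (X' \<inter> Y')"
    using X' Y' by (intro gdim_le_delta) auto
  ultimately show ?thesis
    using delta_submodular[OF X'(2) Y'(2)] X'(3) Y'(3) by linarith
qed

lemma gdim_Un_eq:
  assumes "finite T" "T \<subseteq> A" "C \<subseteq> A" "\<And>a. a \<in> T \<Longrightarrow> gdim n R A (insert a C) = gdim n R A C"
  shows "gdim n R A (C \<union> T) = gdim n R A C"
  using assms
proof (induction T rule: finite_induct)
  case empty
  then show ?case
    by simp
next
  case (insert a T)
  have "C \<union> insert a T = (C \<union> T) \<union> insert a C" "(C \<union> T) \<inter> insert a C = C \<or> (C \<union> T) \<inter> insert a C = insert a C"
    by auto
  moreover have "gdim n R A (C \<union> T) = gdim n R A C" "gdim n R A (insert a C) = gdim n R A C"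
    using insert by auto
  ultimately have "gdim n R A (C \<union> insert a T) \<le> gdim n R A C"
    using gdim_submodular[of "C \<union> T" "insert a C"] insert.prems by auto
  moreover have "gdim n R A C \<le> gdim n R A (C \<union> insert a T)"
    using insert.prems by (intro gdim_mono) auto
  ultimately show ?case
    by linarith
qed

end

locale pure_clq0_structure = clq0_structure n S A for n S A +
  assumes gdim_pure: "C \<subseteq> A \<Longrightarrow> card C = n - 1 \<Longrightarrow> gdim n S A C = int (n - 1)"
begin

lemma gdim_ge_if_subset:
  assumes "D \<subseteq> X" "X \<subseteq> A" "card D = n - 1"
  shows "int (n - 1) \<le> gdim n S A X"
proof -
  have "gdim n S A D = int (n - 1)"
    using assms by (intro gdim_pure) auto
  then show ?thesis
    using gdim_mono[OF assms(1,2)] by simp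
qed

definition lines :: "'a set set" where
  "lines = {gcl n S A C | C. C \<subseteq> A \<and> card C = n - 1 \<and> gcl n S A C \<noteq> C}"

lemma gcl_subset_A: "gcl n S A C \<subseteq> A"
  unfolding gcl_def by auto

lemma subset_gcl: "C \<subseteq> A \<Longrightarrow> C \<subseteq> gcl n S A C"
  unfolding gcl_def by (auto simp: insert_absorb)

lemma mem_gclI:
  assumes "C \<subseteq> A" "card C = n - 1" "a \<in> A" "gdim n S A (insert a C) \<le> int (n - 1)"
  shows "a \<in> gcl n S A C"
proof -
  have "gdim n S A C \<le> gdim n S A (insert a C)"
    using assms by (intro gdim_mono) auto
  then show ?thesis
    using assms gdim_pure[OF assms(1,2)] unfolding gcl_def by simp
qed

lemma gdim_gcl:
  assumes "C \<subseteq> A" "card C = n - 1"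
  shows "gdim n S A (gcl n S A C) = int (n - 1)"
proof -
  have "gdim n S A (C \<union> gcl n S A C) = gdim n S A C"
    using finite_subset_A[OF gcl_subset_A] gcl_subset_A assms(1)
    by (rule gdim_Un_eq) (simp add: gcl_def)
  moreover have "C \<union> gcl n S A C = gcl n S A C"
    using subset_gcl[OF assms(1)] by blast
  ultimately show ?thesis
    using gdim_pure[OF assms] by simp
qed

text \<open>By submodularity, V \<union> cl(C) still has dimension n-1.\<close>
lemma subset_gclI:
  assumes C: "C \<subseteq> A" "card C = n - 1" and V: "V \<subseteq> A" "gdim n S A V \<le> int (n - 1)"
    and D: "D \<subseteq> V \<inter> gcl n S A C" "card D = n - 1"
  shows "V \<subseteq> gcl n S A C"
proof
  fix a assume "a \<in> V"
  let ?L = "gcl n S A C"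
  have "gdim n S A (?L \<union> V) + gdim n S A (?L \<inter> V) \<le> gdim n S A ?L + gdim n S A V"
    using gcl_subset_A V(1) by (rule gdim_submodular)
  moreover have "int (n - 1) \<le> gdim n S A (?L \<inter> V)"
    using D gcl_subset_A by (intro gdim_ge_if_subset[of D]) auto
  ultimately have "gdim n S A (?L \<union> V) \<le> int (n - 1)"
    using gdim_gcl[OF C] V(2) by linarith
  moreover have "gdim n S A (insert a C) \<le> gdim n S A (?L \<union> V)"
    using \<open>a \<in> V\<close> subset_gcl[OF C(1)] gcl_subset_A V(1) by (intro gdim_mono) auto
  ultimately show "a \<in> ?L"
    using mem_gclI[OF C] \<open>a \<in> V\<close> V(1) by auto
qed

lemma linesE:
  assumes "L \<in> lines"
  obtains C where "C \<subseteq> A" "card C = n - 1" "L = gcl n S A C" "gcl n S A C \<noteq> C"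
  using assms that unfolding lines_def by blast

lemma line_subset_A: "L \<in> lines \<Longrightarrow> L \<subseteq> A"
  by (elim linesE) (simp add: gcl_subset_A)

lemma finite_line: "L \<in> lines \<Longrightarrow> finite L"
  by (rule finite_subset_A[OF line_subset_A])

lemma gdim_line: "L \<in> lines \<Longrightarrow> gdim n S A L = int (n - 1)"
  by (elim linesE) (simp add: gdim_gcl)

lemma card_line_ge:
  assumes "L \<in> lines"
  shows "n \<le> card L"
proof -
  obtain C where C: "C \<subseteq> A" "card C = n - 1" "L = gcl n S A C" "gcl n S A C \<noteq> C"
    using assms by (rule linesE)
  hence "C \<subset> L"
    using subset_gcl by blast
  hence "card C < card L"
    using finite_line[OF assms] by (rule psubset_card_mono[rotated])
  then show ?thesis
    using C(2) n_pos by linarith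
qed

lemma lines_eqI:
  assumes "L1 \<in> lines" "L2 \<in> lines" "X \<subseteq> L1 \<inter> L2" "n - 1 \<le> card X"
  shows "L1 = L2"
proof -
  obtain D where D: "D \<subseteq> X" "card D = n - 1"
    using assms(4) by (rule obtain_subset_with_card_n)
  have sub: "L2 \<subseteq> L1" if "L1 \<in> lines" "L2 \<in> lines" "D \<subseteq> L1 \<inter> L2" for L1 L2
  proof -
    obtain C where "C \<subseteq> A" "card C = n - 1" "L1 = gcl n S A C"
      using \<open>L1 \<in> lines\<close> by (rule linesE)
    then show ?thesis
      using subset_gclI[of C L2 D] line_subset_A gdim_line that D(2) by simp
  qed
  have "D \<subseteq> L1 \<inter> L2" "D \<subseteq> L2 \<inter> L1"
    using assms(3) D(1) by auto
  then show ?thesis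
    using sub[OF assms(1,2)] sub[OF assms(2,1)] by (intro subset_antisym)
qed

lemma delta_line:
  assumes "L \<in> lines"
  shows "delta n S L = int (n - 1)"
proof -
  obtain C where C: "C \<subseteq> A" "card C = n - 1" "L = gcl n S A C"
    using assms by (rule linesE)
  obtain Y where Y: "L \<subseteq> Y" "Y \<subseteq> A" "delta n S Y = gdim n S A L"
    using gdim_attained[OF line_subset_A[OF assms]] .
  have "gdim n S A Y \<le> int (n - 1)"
    using gdim_le_delta[OF _ Y(2)] Y(3) gdim_line[OF assms] by simp
  moreover have "C \<subseteq> Y \<inter> gcl n S A C"
    using C(3) Y(1) subset_gcl[OF C(1)] by auto
  ultimately have "Y \<subseteq> L"
    using subset_gclI[OF C(1,2) Y(2)] C(2,3) by blast
  then show ?thesis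
    using Y gdim_line[OF assms] by auto
qed

lemma gcl_line_superset:
  assumes "Q \<subseteq> A" "n \<le> card Q" "C \<subseteq> Q" "card C = n - 1"
    and "\<And>a. a \<in> Q \<Longrightarrow> gdim n S A (insert a C) \<le> int (n - 1)"
  shows "gcl n S A C \<in> lines" "Q \<subseteq> gcl n S A C"
proof -
  have CA: "C \<subseteq> A"
    using assms(1,3) by blast
  show sub: "Q \<subseteq> gcl n S A C"
    using mem_gclI[OF CA assms(4)] assms(1,5) by blast
  have "card C < card Q"
    using assms(2,4) n_pos by linarith
  have "gcl n S A C \<noteq> C"
  proof
    assume "gcl n S A C = C"
    hence "card Q \<le> card C"
      using sub finite_subset_A[OF CA] card_mono by metis
    then show False
      using \<open>card C < card Q\<close> by linarith
  qed
  then show "gcl n S A C \<in> lines"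
    using CA assms(4) unfolding lines_def by blast
qed

lemma line_superset:
  assumes "Q \<subseteq> A" "n \<le> card Q" "gdim n S A Q \<le> int (n - 1)"
  obtains L where "L \<in> lines" "Q \<subseteq> L"
proof -
  have "n - 1 \<le> card Q"
    using assms(2) by linarith
  then obtain C where C: "C \<subseteq> Q" "card C = n - 1"
    by (rule obtain_subset_with_card_n)
  have "gdim n S A (insert a C) \<le> int (n - 1)" if "a \<in> Q" for a
    using gdim_mono[of "insert a C" Q] C(1) that assms(1,3) by simp
  then show ?thesis
    using gcl_line_superset[OF assms(1,2) C] that by blast
qed

lemma finite_lines: "finite lines"
proof -
  have "lines \<subseteq> Pow A"
    using line_subset_A by blast
  then show ?thesis
    using finite_A by (meson finite_Pow_iff finite_subset)
qed

lemma geo_rel_iff: "Y \<in> geo_rel n S A \<longleftrightarrow> Y \<subseteq> A \<and> card Y = n \<and> (\<exists>L\<in>lines. Y \<subseteq> L)"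
  unfolding geo_rel_def lines_def using finite_subset_A by blast

lemma geo_clique_subset_line:
  assumes "clique n (geo_rel n S A) A Q"
  obtains L where "L \<in> lines" "Q \<subseteq> L"
proof -
  have QA: "Q \<subseteq> A"
    using assms by (rule clique_subset_universe)
  have Q: "n \<le> card Q"
    using assms finite_subset_A[OF QA] unfolding clique_def by blast
  hence "n - 1 \<le> card Q"
    by linarith
  then obtain C where C: "C \<subseteq> Q" "card C = n - 1" "finite C"
    by (rule obtain_subset_with_card_n)
  have "gdim n S A (insert a C) \<le> int (n - 1)" if "a \<in> Q" for a
  proof (cases "a \<in> C")
    case True
    then show ?thesis
      using gdim_pure[of C] C QA by (simp add: insert_absorb)
  next
    case False
    have "insert a C \<in> geo_rel n S A"
      using assms that C False n_pos unfolding clique_def by auto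
    then obtain L where "L \<in> lines" "insert a C \<subseteq> L"
      using geo_rel_iff by blast
    then show ?thesis
      using gdim_mono[OF _ line_subset_A] gdim_line by fastforce
  qed
  then show ?thesis
    using gcl_line_superset[OF QA Q C(1,2)] that by blast
qed

lemma line_geo_clique:
  assumes "L \<in> lines"
  shows "clique n (geo_rel n S A) A L"
  using assms line_subset_A[OF assms] card_line_ge[OF assms]
  unfolding clique_def geo_rel_iff by blast

lemma maxcliques_geo_rel: "maxcliques n (geo_rel n S A) A = lines"
proof (intro equalityI subsetI)
  fix K assume "K \<in> maxcliques n (geo_rel n S A) A"
  hence K: "clique n (geo_rel n S A) A K"
    "\<And>K'. clique n (geo_rel n S A) A K' \<Longrightarrow> K \<subseteq> K' \<Longrightarrow> K' = K"
    unfolding maxcliques_def by auto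
  obtain L where L: "L \<in> lines" "K \<subseteq> L"
    using K(1) by (rule geo_clique_subset_line)
  then have "L = K"
    using K(2)[OF line_geo_clique] by simp
  then show "K \<in> lines"
    using L(1) by simp
next
  fix L assume L: "L \<in> lines"
  have "K' = L" if K': "clique n (geo_rel n S A) A K'" "L \<subseteq> K'" for K'
  proof -
    obtain L' where L': "L' \<in> lines" "K' \<subseteq> L'"
      using K'(1) by (rule geo_clique_subset_line)
    have "n - 1 \<le> card L"
      using card_line_ge[OF L] by linarith
    hence "L = L'"
      using lines_eqI[OF L L'(1), of L] K'(2) L'(2) by blast
    then show ?thesis
      using K'(2) L'(2) by blast
  qed
  then show "L \<in> maxcliques n (geo_rel n S A) A"
    unfolding maxcliques_def using line_geo_clique[OF L] by blast
qed

lemma C_clq0_geo_rel: "C_clq0 n A (geo_rel n S A)"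
proof -
  have "is_structure n A (geo_rel n S A)"
    unfolding is_structure_def
  proof
    fix Y assume "Y \<in> geo_rel n S A"
    hence "Y \<subseteq> A" "card Y = n"
      unfolding geo_rel_iff by simp_all
    then show "Y \<subseteq> A \<and> finite Y \<and> card Y = n"
      using finite_subset_A by simp
  qed
  moreover have "card (L1 \<inter> L2) < n" if L: "L1 \<in> lines" "L2 \<in> lines" "L1 \<noteq> L2" for L1 L2
  proof (rule ccontr)
    assume "\<not> card (L1 \<inter> L2) < n"
    hence "n - 1 \<le> card (L1 \<inter> L2)"
      by linarith
    then show False
      using lines_eqI[OF L(1,2) order_refl] L(3) by blast
  qed
  ultimately show ?thesis
    unfolding C_clq0_def maxcliques_geo_rel using finite_A by simp
qed

sublocale geo: clq0_structure n "geo_rel n S A" A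
  by (rule clq0_structure.intro[OF n_pos C_clq0_geo_rel])

lemma delta_geo_rel:
  "X \<subseteq> A \<Longrightarrow> delta n (geo_rel n S A) X = int (card X) - (\<Sum>L\<in>lines. int (starcard n (L \<inter> X)))"
  using geo.delta_eq_sum_maxcliques by (simp add: maxcliques_geo_rel)

lemma starcard_line_eq_sum:
  assumes "L \<in> lines"
  shows "int (starcard n L) = (\<Sum>K\<in>maxcliques n S A. int (starcard n (K \<inter> L)))"
  using delta_line[OF assms] delta_eq_sum_maxcliques[OF line_subset_A[OF assms]]
    card_line_ge[OF assms] n_pos
  by (simp add: starcard_def Int_absorb2 of_nat_diff)

text \<open>If K \<inter> W has at least n points, it lies in exactly one line, and that line lies in W.\<close>
lemma starcard_Int_line_closed:
  assumes W: "W \<subseteq> A" "geo.clique_closed W" and K: "K \<in> maxcliques n S A"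
  shows "int (starcard n (K \<inter> W)) = (\<Sum>L\<in>{L \<in> lines. L \<subseteq> W}. int (starcard n (K \<inter> L)))"
proof (cases "n \<le> card (K \<inter> W)")
  case True
  have "clique n S A (K \<inter> W)"
    using clique_subset[OF maxclique_clique[OF K] _ True] by simp
  hence "gdim n S A (K \<inter> W) \<le> int (n - 1)"
    using gdim_le_delta[of "K \<inter> W" "K \<inter> W"] W(1) delta_clique n_pos by fastforce
  then obtain L0 where L0: "L0 \<in> lines" "K \<inter> W \<subseteq> L0"
    using line_superset[OF _ True] W(1) by blast
  have "card (K \<inter> W) \<le> card (L0 \<inter> W)"
    using L0 finite_line by (intro card_mono) auto
  hence "L0 \<subseteq> W"
    using W(2) L0(1) True unfolding geo.clique_closed_def maxcliques_geo_rel by auto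
  hence KL0: "K \<inter> L0 = K \<inter> W"
    using L0(2) by blast
  have "starcard n (K \<inter> L) = 0" if L: "L \<in> lines" "L \<subseteq> W" "L \<noteq> L0" for L
  proof (rule ccontr)
    assume "starcard n (K \<inter> L) \<noteq> 0"
    hence "n - 1 \<le> card (K \<inter> L)"
      unfolding starcard_def by linarith
    moreover have "K \<inter> L \<subseteq> L \<inter> L0"
      using L(2) L0(2) by blast
    ultimately show False
      using lines_eqI[OF L(1) L0(1)] L(3) by blast
  qed
  hence "(\<Sum>L\<in>{L0}. int (starcard n (K \<inter> L))) = (\<Sum>L\<in>{L \<in> lines. L \<subseteq> W}. int (starcard n (K \<inter> L)))"
    using \<open>L0 \<subseteq> W\<close> L0(1) finite_lines by (intro sum.mono_neutral_left) auto
  then show ?thesis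
    using KL0 by simp
next
  case False
  have "starcard n (K \<inter> L) = 0" if "L \<subseteq> W" for L
  proof -
    have "card (K \<inter> L) \<le> card (K \<inter> W)"
      using that finite_maxclique[OF K] by (intro card_mono) auto
    then show ?thesis
      using False unfolding starcard_def by simp
  qed
  moreover have "starcard n (K \<inter> W) = 0"
    using False unfolding starcard_def by simp
  ultimately show ?thesis
    by simp
qed

lemma delta_geo_rel_line_closed:
  assumes W: "W \<subseteq> A" "geo.clique_closed W"
  shows "delta n (geo_rel n S A) W = delta n S W"
proof -
  let ?T = "{L \<in> lines. L \<subseteq> W}"
  have "(\<Sum>L\<in>lines. int (starcard n (L \<inter> W))) = (\<Sum>L\<in>?T. int (starcard n (L \<inter> W)))"
    using W(2) finite_lines unfolding geo.clique_closed_def maxcliques_geo_rel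
    by (intro sum.mono_neutral_right) (auto simp: starcard_def)
  also have "\<dots> = (\<Sum>L\<in>?T. \<Sum>K\<in>maxcliques n S A. int (starcard n (K \<inter> L)))"
    by (intro sum.cong) (auto simp: Int_absorb2 starcard_line_eq_sum)
  also have "\<dots> = (\<Sum>K\<in>maxcliques n S A. \<Sum>L\<in>?T. int (starcard n (K \<inter> L)))"
    by (rule sum.swap)
  also have "\<dots> = (\<Sum>K\<in>maxcliques n S A. int (starcard n (K \<inter> W)))"
    using starcard_Int_line_closed[OF W] by simp
  finally show ?thesis
    using W(1) by (simp add: delta_geo_rel delta_eq_sum_maxcliques)
qed

lemma geometric_geo_rel: "geometric n A (geo_rel n S A)"
  unfolding geometric_def
proof (intro allI impI)
  fix X assume X: "X \<subseteq> A \<and> finite X \<and> n \<le> card X \<and> delta n (geo_rel n S A) X < int n"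
  obtain W where W: "X \<subseteq> W" "W \<subseteq> A" "delta n (geo_rel n S A) W \<le> delta n (geo_rel n S A) X"
    "geo.clique_closed W"
    using X geo.clique_closed_hull by blast
  have "gdim n S A X \<le> delta n S W"
    using W(1,2) by (rule gdim_le_delta)
  also have "\<dots> \<le> delta n (geo_rel n S A) X"
    using W delta_geo_rel_line_closed by simp
  finally have "gdim n S A X \<le> int (n - 1)"
    using X by linarith
  then obtain L where L: "L \<in> lines" "X \<subseteq> L"
    using line_superset X by blast
  moreover have "L' = L" if "L' \<in> lines" "X \<subseteq> L'" for L'
  proof -
    have "n - 1 \<le> card X"
      using X by linarith
    then show ?thesis
      using lines_eqI[OF that(1) L(1), of X] that(2) L(2) by simp
  qed
  ultimately show "\<exists>!K. K \<in> maxcliques n (geo_rel n S A) A \<and> X \<subseteq> K"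
    unfolding maxcliques_geo_rel by blast
qed

end

theorem mainTheorem3:
  fixes n :: nat and A :: "'a set" and S :: "'a set set"
  assumes "1 \<le> n"
    and "C_clq n A S"
    and "gpure n S A (n - 1)"
  shows "C_geo n A (geo_rel n S A)"
proof -
  interpret pure_clq0_structure n S A
  proof
    show "1 \<le> n" "C_clq0 n A S"
      using assms(1,2) unfolding C_clq_def by simp_all
    show "gdim n S A C = int (n - 1)" if "C \<subseteq> A" "card C = n - 1" for C
      using assms(3) that unfolding gpure_def gindep_def by simp
  qed
  show ?thesis
    using C_clq0_geo_rel geometric_geo_rel unfolding C_geo_def C_clq0_def by simp
qed

end
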